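(* Fix $x> 0$, $y>0$. Suppose $B_\nu(x,y)$ is an upper (respectively lower) bound for $P_\nu(x,y)$ for every $\nu>0$. Then for every $\mu>0$ and every integer $n\ge 0$, $$B^{(n)}_{\mu}(x,y)=B_{\mu+n+1}(x,y)+e^{-x-y}\sum_{k=0}^{n}\left(\frac{y}{x}\right)^{\frac{\mu+k}{2}}I_{\mu+k}(2\sqrt{xy})$$ is an upper (respectively lower) bound for $P_\mu(x,y)$. If moreover $B_{\nu}(x,y)\to 0$ as $\nu\to+\infty$, then $B^{(n)}_\mu(x,y)\to P_\mu(x,y)$ as $n\to\infty$.
   Context: For $\mu>0$, $x>0$, $y\ge0$, the generalized Marcum $P$-function is $P_{\mu}(x,y)=x^{\frac12(1-\mu)}\int_0^{y} t^{\frac12(\mu-1)}e^{-t-x}I_{\mu-1}(2\sqrt{xt})\,dt$, where $I_\nu$ is the modified Bessel function of the first kind. *)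

theory Defs
  imports "HOL-Analysis.Analysis"
begin

definition bessel_I :: "real \<Rightarrow> real \<Rightarrow> real" where
  "bessel_I nu z = (\<Sum>k. (z / 2) powr (2 * real k + nu) / (fact k * Gamma (real k + nu + 1)))"

definition marcumP :: "real \<Rightarrow> real \<Rightarrow> real \<Rightarrow> real" where
  "marcumP mu x y = x powr ((1 - mu) / 2) *
     integral {0..y} (\<lambda>t. t powr ((mu - 1) / 2) * exp (- t - x) * bessel_I (mu - 1) (2 * sqrt (x * t)))"

definition Bn :: "(real \<Rightarrow> real \<Rightarrow> real \<Rightarrow> real) \<Rightarrow> nat \<Rightarrow> real \<Rightarrow> real \<Rightarrow> real \<Rightarrow> real" where
  "Bn B n mu x y = B (mu + real n + 1) x y +
     exp (- x - y) * (\<Sum>k=0..n. (y / x) powr ((mu + real k) / 2) * bessel_I (mu + real k) (2 * sqrt (x * y)))"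

end

theory Submission
  imports Defs
begin

text \<open>Put \<open>h\<^sub>a(t) = (t/x)^(a/2) I\<^sub>a(2 sqrt(x t)) = t^a \<Sum>\<^sub>k x^k t^k / (k! \<Gamma>(k+a+1))\<close>.
  Termwise differentiation gives \<open>h\<^sub>a' = h\<^sub>a\<^sub>-\<^sub>1\<close>, and the Marcum integrand is
  \<open>e^(-t-x) h\<^sub>\<nu>\<^sub>-\<^sub>1(t)\<close>. Since \<open>(-e^(-t-x) h\<^sub>\<mu>(t))' = e^(-t-x) (h\<^sub>\<mu>(t) - h\<^sub>\<mu>\<^sub>-\<^sub>1(t))\<close>,
  integration over \<open>[0,y]\<close> gives \<open>P\<^sub>\<mu> = P\<^sub>\<mu>\<^sub>+\<^sub>1 + e^(-x-y) h\<^sub>\<mu>(y)\<close>. Telescoping,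
  \<open>B\<^sup>(\<^sup>n\<^sup>)\<^sub>\<mu> - P\<^sub>\<mu> = B\<^sub>\<mu>\<^sub>+\<^sub>n\<^sub>+\<^sub>1 - P\<^sub>\<mu>\<^sub>+\<^sub>n\<^sub>+\<^sub>1\<close>, whence both bounds; the limit follows from
  \<open>0 \<le> P\<^sub>\<mu>\<^sub>+\<^sub>n\<^sub>+\<^sub>1 \<le> y h\<^sub>\<mu>\<^sub>+\<^sub>n(y) = O(y^n / n!)\<close>.\<close>

definition bessel_coeff :: "real \<Rightarrow> real \<Rightarrow> nat \<Rightarrow> real" where
  "bessel_coeff x a k = x ^ k / (fact k * Gamma (real k + a + 1))"

definition bessel_series :: "real \<Rightarrow> real \<Rightarrow> real \<Rightarrow> real" where
  "bessel_series x a t = (\<Sum>k. bessel_coeff x a k * t ^ k)"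

definition bessel_kernel :: "real \<Rightarrow> real \<Rightarrow> real \<Rightarrow> real" where
  "bessel_kernel x a t = t powr a * bessel_series x a t"

definition marcum_integrand :: "real \<Rightarrow> real \<Rightarrow> real \<Rightarrow> real" where
  "marcum_integrand x nu t = exp (- t - x) * bessel_kernel x (nu - 1) t"

lemma Gamma_plus1_pos:
  fixes b :: real
  assumes "b > 0"
  shows "Gamma (b + 1) = b * Gamma b"
proof -
  have "b \<notin> \<int>\<^sub>\<le>\<^sub>0" using assms by (auto dest: nonpos_Ints_nonpos)
  then show ?thesis by (rule Gamma_plus1)
qed

lemma fact_mult_Gamma_le_Gamma_add:
  fixes b :: real
  assumes "b \<ge> 1"
  shows "fact m * Gamma b \<le> Gamma (b + real m)"
proof (induction m)
  case (Suc m)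
  have "fact (Suc m) * Gamma b = (real m + 1) * (fact m * Gamma b)" by simp
  also have "\<dots> \<le> (b + real m) * Gamma (b + real m)"
    using Suc assms by (intro mult_mono) (auto intro: less_imp_le[OF Gamma_real_pos])
  also have "\<dots> = Gamma (b + real (Suc m))"
    using Gamma_plus1_pos[of "b + real m"] assms by (simp add: algebra_simps)
  finally show ?case .
qed simp

subsection \<open>The Bessel kernel as a power series\<close>

lemma bessel_coeff_nonneg: "x \<ge> 0 \<Longrightarrow> a > -1 \<Longrightarrow> bessel_coeff x a k \<ge> 0"
  unfolding bessel_coeff_def by (intro divide_nonneg_pos) auto

lemma bessel_coeff_Suc:
  assumes "a > -1"
  shows "bessel_coeff x a (Suc k) = bessel_coeff x a k * (x / ((real k + 1) * (real k + a + 1)))"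
proof -
  have "Gamma (real (Suc k) + a + 1) = (real k + a + 1) * Gamma (real k + a + 1)"
    using Gamma_plus1_pos[of "real k + a + 1"] assms by (simp add: algebra_simps)
  then show ?thesis unfolding bessel_coeff_def using assms by (simp add: field_simps)
qed

lemma bessel_coeff_pred_order:
  assumes "a > 0"
  shows "(a + real k) * bessel_coeff x a k = bessel_coeff x (a - 1) k"
proof -
  have "Gamma (real k + a + 1) = (real k + a) * Gamma (real k + a)"
    using Gamma_plus1_pos[of "real k + a"] assms by (simp add: algebra_simps)
  moreover have "Gamma (real k + a) > 0" "real k + a > 0" using assms by simp_all
  ultimately show ?thesis unfolding bessel_coeff_def
    by (simp add: divide_simps del: of_nat_add)
qed

lemma summable_bessel_series:
  assumes "a > -1"
  shows "summable (\<lambda>k. bessel_coeff x a k * t ^ k)"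
proof (rule summable_ratio_test[where c="1/2" and N="nat \<lceil>2 * \<bar>x * t\<bar>\<rceil> + 1"])
  fix n assume n: "n \<ge> nat \<lceil>2 * \<bar>x * t\<bar>\<rceil> + 1"
  then have n1: "real n \<ge> 1" and n2: "real n \<ge> 2 * \<bar>x * t\<bar>" by linarith+
  have "(real n + 1) * (real n + a + 1) \<ge> real n * 1"
    using n1 assms by (intro mult_mono) auto
  then have large: "(real n + 1) * (real n + a + 1) \<ge> 2 * \<bar>x * t\<bar>" using n2 by linarith
  have pos: "(real n + 1) * (real n + a + 1) > 0" using n1 assms by auto
  have "norm (bessel_coeff x a (Suc n) * t ^ Suc n)
      = norm (bessel_coeff x a n * t ^ n) * (\<bar>x * t\<bar> / ((real n + 1) * (real n + a + 1)))"
    using pos by (simp add: bessel_coeff_Suc[OF assms] abs_mult field_simps)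
  also have "\<dots> \<le> norm (bessel_coeff x a n * t ^ n) * (1/2)"
    using large pos by (intro mult_left_mono) (auto simp: field_simps)
  finally show "norm (bessel_coeff x a (Suc n) * t ^ Suc n) \<le> 1/2 * norm (bessel_coeff x a n * t ^ n)"
    by simp
qed auto

lemma bessel_I_term_eq:
  assumes "x > 0" "t > 0"
  shows "(t / x) powr (a / 2) * ((2 * sqrt (x * t) / 2) powr (2 * real k + a)
           / (fact k * Gamma (real k + a + 1)))
       = t powr a * (bessel_coeff x a k * t ^ k)"
proof -
  have "sqrt (x * t) powr (2 * real k + a) = (x * t) ^ k * (x * t) powr (a / 2)"
    using assms by (simp add: powr_add powr_half_sqrt[symmetric] powr_powr powr_realpow)
  moreover have "(t / x) powr (a / 2) * (x * t) powr (a / 2) = t powr a"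
  proof -
    have "(t / x) powr (a / 2) * (x * t) powr (a / 2) = (t * t) powr (a / 2)"
      using assms by (simp add: powr_mult[symmetric])
    also have "\<dots> = t powr a" using assms by (simp add: powr_mult powr_add[symmetric])
    finally show ?thesis .
  qed
  ultimately show ?thesis
    unfolding bessel_coeff_def by (simp add: power_mult_distrib field_simps)
qed

lemma bessel_I_eq_kernel:
  assumes "x > 0" "t > 0" "a > -1"
  shows "(t / x) powr (a / 2) * bessel_I a (2 * sqrt (x * t)) = bessel_kernel x a t"
proof -
  define C where "C = (t / x) powr (a / 2)"
  define f where "f k = (2 * sqrt (x * t) / 2) powr (2 * real k + a) / (fact k * Gamma (real k + a + 1))"
    for k
  have "C \<noteq> 0" using assms by (simp add: C_def)
  have "(\<lambda>k. t powr a * (bessel_coeff x a k * t ^ k)) sums bessel_kernel x a t"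
    unfolding bessel_kernel_def bessel_series_def
    using summable_bessel_series[OF assms(3)] by (intro sums_mult summable_sums)
  then have "(\<lambda>k. C * f k) sums bessel_kernel x a t"
    using bessel_I_term_eq[OF assms(1,2)] by (simp add: C_def f_def)
  then have "(\<lambda>k. C * f k / C) sums (bessel_kernel x a t / C)" by (rule sums_divide)
  with \<open>C \<noteq> 0\<close> have "C * suminf f = bessel_kernel x a t" by (simp add: sums_iff)
  then show ?thesis unfolding bessel_I_def C_def f_def .
qed

lemma bessel_series_nonneg: "x \<ge> 0 \<Longrightarrow> a > -1 \<Longrightarrow> t \<ge> 0 \<Longrightarrow> bessel_series x a t \<ge> 0"
  unfolding bessel_series_def
  by (intro suminf_nonneg summable_bessel_series) (auto intro!: mult_nonneg_nonneg bessel_coeff_nonneg)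

lemma bessel_series_mono:
  "x \<ge> 0 \<Longrightarrow> a > -1 \<Longrightarrow> 0 \<le> t \<Longrightarrow> t \<le> y \<Longrightarrow> bessel_series x a t \<le> bessel_series x a y"
  unfolding bessel_series_def
  by (intro suminf_le summable_bessel_series) (auto intro!: mult_left_mono power_mono bessel_coeff_nonneg)

lemma bessel_kernel_nonneg: "x \<ge> 0 \<Longrightarrow> a > -1 \<Longrightarrow> t \<ge> 0 \<Longrightarrow> bessel_kernel x a t \<ge> 0"
  unfolding bessel_kernel_def by (intro mult_nonneg_nonneg bessel_series_nonneg) auto

lemma bessel_kernel_mono:
  "x \<ge> 0 \<Longrightarrow> a > 0 \<Longrightarrow> 0 \<le> t \<Longrightarrow> t \<le> y \<Longrightarrow> bessel_kernel x a t \<le> bessel_kernel x a y"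
  unfolding bessel_kernel_def by (intro mult_mono bessel_series_mono powr_mono2 bessel_series_nonneg) auto

lemma continuous_on_bessel_kernel:
  assumes "a > 0"
  shows "continuous_on {0..} (bessel_kernel x a)"
proof -
  have "continuous_on {0..} (bessel_series x a)"
    unfolding bessel_series_def[abs_def] using summable_bessel_series[of a] assms
    by (intro continuous_at_imp_continuous_on ballI isCont_powser_converges_everywhere) auto
  then show ?thesis
    unfolding bessel_kernel_def[abs_def] using assms
    by (intro continuous_intros continuous_on_powr') auto
qed

lemma bessel_series_times_deriv:
  assumes "a > 0"
  shows "a * bessel_series x a t + t * (\<Sum>n. diffs (bessel_coeff x a) n * t ^ n)
       = bessel_series x (a - 1) t"
proof -
  define f where "f n = real n * bessel_coeff x a n * t ^ n" for n
  have "summable (\<lambda>n. diffs (bessel_coeff x a) n * t ^ n)"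
    using summable_bessel_series assms by (intro termdiff_converges_all) auto
  then have "(\<lambda>n. t * (diffs (bessel_coeff x a) n * t ^ n))
               sums (t * (\<Sum>n. diffs (bessel_coeff x a) n * t ^ n))"
    by (intro sums_mult summable_sums)
  then have "(\<lambda>n. f (Suc n)) sums (t * (\<Sum>n. diffs (bessel_coeff x a) n * t ^ n))"
    by (simp add: f_def diffs_def algebra_simps)
  then have "f sums (t * (\<Sum>n. diffs (bessel_coeff x a) n * t ^ n) + f 0)"
    by (simp only: sums_Suc_iff)
  then have "f sums (t * (\<Sum>n. diffs (bessel_coeff x a) n * t ^ n))"
    by (simp add: f_def)
  moreover have "(\<lambda>n. a * (bessel_coeff x a n * t ^ n)) sums (a * bessel_series x a t)"
    unfolding bessel_series_def using summable_bessel_series[of a] assms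
    by (intro sums_mult summable_sums) auto
  ultimately have "(\<lambda>n. a * (bessel_coeff x a n * t ^ n) + f n)
      sums (a * bessel_series x a t + t * (\<Sum>n. diffs (bessel_coeff x a) n * t ^ n))"
    using sums_add by blast
  moreover have "a * (bessel_coeff x a n * t ^ n) + f n = bessel_coeff x (a - 1) n * t ^ n" for n
    unfolding f_def bessel_coeff_pred_order[OF assms, of n x, symmetric] by (simp add: algebra_simps)
  ultimately show ?thesis unfolding bessel_series_def by (simp add: sums_iff)
qed

lemma bessel_kernel_has_derivative:
  assumes "a > 0" "t > 0"
  shows "(bessel_kernel x a has_real_derivative bessel_kernel x (a - 1) t) (at t)"
proof -
  let ?D = "\<Sum>n. diffs (bessel_coeff x a) n * t ^ n"
  have "(bessel_series x a has_real_derivative ?D) (at t)"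
    unfolding bessel_series_def[abs_def] using summable_bessel_series[of a] assms
    by (intro termdiffs_strong_converges_everywhere) auto
  then have "(bessel_kernel x a has_real_derivative
               (a * t powr (a - 1) * bessel_series x a t + t powr a * ?D)) (at t)"
    unfolding bessel_kernel_def[abs_def] using assms(2)
    by (auto intro!: derivative_eq_intros)
  moreover have "t powr a = t powr (a - 1) * t"
    using assms powr_add[of t "a - 1" 1] by simp
  ultimately show ?thesis
    unfolding bessel_kernel_def bessel_series_times_deriv[OF assms(1), symmetric]
    by (simp add: algebra_simps)
qed

subsection \<open>The Marcum function and its recurrence\<close>

lemma marcumP_eq_integral:
  assumes "x > 0" "nu > 0"
  shows "marcumP nu x y = integral {0..y} (marcum_integrand x nu)"
proof -
  have "marcum_integrand x nu t = x powr ((1 - nu) / 2) *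
          (t powr ((nu - 1) / 2) * exp (- t - x) * bessel_I (nu - 1) (2 * sqrt (x * t)))"
    if "t \<in> {0..y}" for t
  proof (cases "t = 0")
    case True
    then show ?thesis by (simp add: marcum_integrand_def bessel_kernel_def)
  next
    case False
    with that have "t > 0" by simp
    have "x powr ((1 - nu) / 2) * x powr ((nu - 1) / 2) = 1"
      using assms by (simp add: powr_add[symmetric] diff_divide_distrib)
    then have "x powr ((1 - nu) / 2) * t powr ((nu - 1) / 2) = (t / x) powr ((nu - 1) / 2)"
      using assms \<open>t > 0\<close> by (simp add: powr_divide divide_simps)
    moreover have "(t / x) powr ((nu - 1) / 2) * bessel_I (nu - 1) (2 * sqrt (x * t))
                   = bessel_kernel x (nu - 1) t"
      using bessel_I_eq_kernel[OF assms(1) \<open>t > 0\<close>] assms by simp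
    ultimately show ?thesis
      unfolding marcum_integrand_def by (metis mult.assoc mult.commute mult.left_commute)
  qed
  then have "integral {0..y} (marcum_integrand x nu) = integral {0..y} (\<lambda>t. x powr ((1 - nu) / 2) *
              (t powr ((nu - 1) / 2) * exp (- t - x) * bessel_I (nu - 1) (2 * sqrt (x * t))))"
    by (rule integral_cong)
  then show ?thesis unfolding marcumP_def by simp
qed

lemma marcum_integrand_has_integral_recurrence:
  assumes "x > 0" "y > 0" "mu > 0"
  shows "(marcum_integrand x mu has_integral
           integral {0..y} (marcum_integrand x (mu + 1)) + exp (- x - y) * bessel_kernel x mu y) {0..y}"
proof -
  define G where "G t = - exp (- t - x) * bessel_kernel x mu t" for t
  have cont: "continuous_on {0..y} (bessel_kernel x mu)"
    using continuous_on_subset[OF continuous_on_bessel_kernel[OF assms(3)]] by auto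
  have "(G has_vector_derivative (marcum_integrand x (mu + 1) t - marcum_integrand x mu t)) (at t)"
    if "t \<in> {0<..<y}" for t
  proof -
    have "(G has_real_derivative
            exp (- t - x) * bessel_kernel x mu t - exp (- t - x) * bessel_kernel x (mu - 1) t) (at t)"
      unfolding G_def[abs_def] using bessel_kernel_has_derivative[OF assms(3), of t] that
      by (auto intro!: derivative_eq_intros simp: algebra_simps)
    then show ?thesis
      by (simp add: marcum_integrand_def has_real_derivative_iff_has_vector_derivative)
  qed
  moreover have "continuous_on {0..y} G" unfolding G_def using cont by (intro continuous_intros)
  ultimately have "((\<lambda>t. marcum_integrand x (mu + 1) t - marcum_integrand x mu t)
                  has_integral (G y - G 0)) {0..y}"
    using fundamental_theorem_of_calculus_interior[of 0 y G] assms by simp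
  moreover have "G y - G 0 = - exp (- x - y) * bessel_kernel x mu y"
    unfolding G_def bessel_kernel_def using assms by (simp add: algebra_simps)
  ultimately have diff: "((\<lambda>t. marcum_integrand x (mu + 1) t - marcum_integrand x mu t)
                  has_integral (- exp (- x - y) * bessel_kernel x mu y)) {0..y}"
    by simp
  have "marcum_integrand x (mu + 1) integrable_on {0..y}"
    unfolding marcum_integrand_def using cont by (intro integrable_continuous_interval continuous_intros) auto
  from has_integral_diff[OF integrable_integral[OF this] diff] show ?thesis by simp
qed

lemma marcumP_recurrence:
  assumes "x > 0" "y > 0" "mu > 0"
  shows "marcumP mu x y
       = marcumP (mu + 1) x y + exp (- x - y) * (y / x) powr (mu / 2) * bessel_I mu (2 * sqrt (x * y))"
  using marcum_integrand_has_integral_recurrence[OF assms] bessel_I_eq_kernel[of x y mu]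
    marcumP_eq_integral[of x mu y] marcumP_eq_integral[of x "mu + 1" y] assms
  by (simp add: integral_unique)

lemma marcum_integrand_integrable:
  assumes "x > 0" "y > 0" "nu > 0"
  shows "marcum_integrand x nu integrable_on {0..y}"
  using marcum_integrand_has_integral_recurrence[OF assms] by blast

lemma marcumP_nonneg:
  assumes "x > 0" "y > 0" "nu > 0"
  shows "marcumP nu x y \<ge> 0"
  unfolding marcumP_eq_integral[OF assms(1,3)] using marcum_integrand_integrable[OF assms] assms
  by (intro integral_nonneg) (auto simp: marcum_integrand_def intro!: mult_nonneg_nonneg bessel_kernel_nonneg)

lemma marcumP_telescope:
  assumes "x > 0" "y > 0" "mu > 0"
  shows "marcumP mu x y = marcumP (mu + real n + 1) x y + exp (- x - y) *
           (\<Sum>k=0..n. (y / x) powr ((mu + real k) / 2) * bessel_I (mu + real k) (2 * sqrt (x * y)))"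
proof (induction n)
  case 0
  show ?case using marcumP_recurrence[OF assms] by simp
next
  case (Suc n)
  from Suc marcumP_recurrence[OF assms(1,2), of "mu + real (Suc n)"] assms show ?case
    by (simp add: algebra_simps)
qed

lemma Bn_minus_marcumP:
  assumes "x > 0" "y > 0" "mu > 0"
  shows "Bn B n mu x y - marcumP mu x y = B (mu + real n + 1) x y - marcumP (mu + real n + 1) x y"
  unfolding Bn_def marcumP_telescope[OF assms, of n] by simp

subsection \<open>Decay of the Marcum function in the order\<close>

lemma bessel_series_le_exp:
  assumes "x > 0" "y > 0" "mu > 0"
  shows "bessel_series x (mu + real n) y \<le> exp (x * y) / (fact n * Gamma (mu + 1))"
proof -
  have G: "Gamma (mu + 1) > 0" using assms by simp
  have term_le: "bessel_coeff x (mu + real n) k * y ^ k \<le> ((x * y) ^ k / fact k) / (fact n * Gamma (mu + 1))"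
    for k
  proof -
    have "fact n * Gamma (mu + 1) \<le> fact (k + n) * Gamma (mu + 1)"
      using G by (intro mult_right_mono) (auto intro: fact_mono)
    also have "\<dots> \<le> Gamma (real k + (mu + real n) + 1)"
      using fact_mult_Gamma_le_Gamma_add[of "mu + 1" "k + n"] assms by (simp add: algebra_simps)
    finally show ?thesis
      unfolding bessel_coeff_def using G assms
      by (simp add: power_mult_distrib divide_left_mono mult_left_mono mult_pos_pos del: of_nat_add)
  qed
  have exp_sums: "(\<lambda>k. ((x * y) ^ k / fact k) / (fact n * Gamma (mu + 1)))
                   sums (exp (x * y) / (fact n * Gamma (mu + 1)))"
    using exp_converges[of "x * y"] by (intro sums_divide) (simp add: divide_inverse mult.commute)
  have "bessel_series x (mu + real n) y \<le> (\<Sum>k. ((x * y) ^ k / fact k) / (fact n * Gamma (mu + 1)))"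
    unfolding bessel_series_def using term_le summable_bessel_series[of "mu + real n" x y] assms exp_sums
    by (intro suminf_le) (auto simp: sums_iff)
  with exp_sums show ?thesis by (simp add: sums_iff)
qed

lemma marcumP_shift_le:
  assumes "x > 0" "y > 0" "mu > 0"
  shows "marcumP (mu + real n + 1) x y \<le> y * (y powr mu * exp (x * y) / Gamma (mu + 1)) * (y ^ n / fact n)"
proof -
  let ?f = "marcum_integrand x (mu + real n + 1)"
  have "?f t \<le> bessel_kernel x (mu + real n) y" if "t \<in> {0..y}" for t
  proof -
    have "?f t = exp (- t - x) * bessel_kernel x (mu + real n) t"
      by (simp add: marcum_integrand_def)
    also have "\<dots> \<le> bessel_kernel x (mu + real n) t"
      using that assms by (intro mult_left_le_one_le bessel_kernel_nonneg) auto
    also have "\<dots> \<le> bessel_kernel x (mu + real n) y"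
      using bessel_kernel_mono[of x "mu + real n" t y] that assms by simp
    finally show ?thesis .
  qed
  moreover have "?f integrable_on {0..y}"
    using marcum_integrand_integrable[of x y "mu + real n + 1"] assms by simp
  ultimately have "integral {0..y} ?f \<le> integral {0..y} (\<lambda>_. bessel_kernel x (mu + real n) y)"
    by (intro integral_le) auto
  then have "marcumP (mu + real n + 1) x y \<le> y * bessel_kernel x (mu + real n) y"
    using marcumP_eq_integral[of x "mu + real n + 1" y] assms by simp
  also have "\<dots> \<le> y * (y powr (mu + real n) * (exp (x * y) / (fact n * Gamma (mu + 1))))"
    unfolding bessel_kernel_def using bessel_series_le_exp[OF assms, of n] assms
    by (intro mult_left_mono) auto
  also have "\<dots> = y * (y powr mu * exp (x * y) / Gamma (mu + 1)) * (y ^ n / fact n)"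
    using assms by (simp add: powr_add powr_realpow field_simps)
  finally show ?thesis .
qed

lemma marcumP_shift_tendsto_0:
  assumes "x > 0" "y > 0" "mu > 0"
  shows "(\<lambda>n. marcumP (mu + real n + 1) x y) \<longlonglongrightarrow> 0"
proof (rule real_tendsto_sandwich[OF _ _ tendsto_const])
  have "(\<lambda>n. y ^ n / fact n) \<longlonglongrightarrow> 0"
    using exp_converges[of y] by (intro summable_LIMSEQ_zero) (auto simp: sums_iff divide_inverse mult.commute)
  then show "(\<lambda>n. y * (y powr mu * exp (x * y) / Gamma (mu + 1)) * (y ^ n / fact n)) \<longlonglongrightarrow> 0"
    by (intro tendsto_mult_right_zero)
  show "\<forall>\<^sub>F n in sequentially. marcumP (mu + real n + 1) x y
          \<le> y * (y powr mu * exp (x * y) / Gamma (mu + 1)) * (y ^ n / fact n)"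
    using marcumP_shift_le[OF assms] by simp
  show "\<forall>\<^sub>F n in sequentially. 0 \<le> marcumP (mu + real n + 1) x y"
    using marcumP_nonneg[of x y "mu + real _ + 1"] assms by simp
qed

theorem proposition2:
  fixes x y :: real and B :: "real \<Rightarrow> real \<Rightarrow> real \<Rightarrow> real"
  assumes "x > 0" and "y > 0"
  shows "((\<forall>nu>0. marcumP nu x y \<le> B nu x y) \<longrightarrow>
            (\<forall>mu>0. \<forall>n::nat. marcumP mu x y \<le> Bn B n mu x y))
       \<and> ((\<forall>nu>0. B nu x y \<le> marcumP nu x y) \<longrightarrow>
            (\<forall>mu>0. \<forall>n::nat. Bn B n mu x y \<le> marcumP mu x y))
       \<and> (((\<forall>nu>0. marcumP nu x y \<le> B nu x y) \<or> (\<forall>nu>0. B nu x y \<le> marcumP nu x y))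
            \<and> ((\<lambda>nu. B nu x y) \<longlongrightarrow> 0) at_top \<longrightarrow>
            (\<forall>mu>0. (\<lambda>n. Bn B n mu x y) \<longlonglongrightarrow> marcumP mu x y))"
proof (intro conjI impI allI)
  fix mu :: real and n :: nat
  assume "mu > 0"
  note diff = Bn_minus_marcumP[OF assms this, of B n]
  show "marcumP mu x y \<le> Bn B n mu x y" if "\<forall>nu>0. marcumP nu x y \<le> B nu x y"
    using that[rule_format, of "mu + real n + 1"] diff \<open>mu > 0\<close> by simp
  show "Bn B n mu x y \<le> marcumP mu x y" if "\<forall>nu>0. B nu x y \<le> marcumP nu x y"
    using that[rule_format, of "mu + real n + 1"] diff \<open>mu > 0\<close> by simp
next
  fix mu :: real
  assume H: "((\<forall>nu>0. marcumP nu x y \<le> B nu x y) \<or> (\<forall>nu>0. B nu x y \<le> marcumP nu x y))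
               \<and> ((\<lambda>nu. B nu x y) \<longlongrightarrow> 0) at_top" and "mu > 0"
  have "filterlim (\<lambda>n. mu + real n + 1) at_top sequentially"
    by (rule filterlim_at_top_mono[OF filterlim_real_sequentially]) (use \<open>mu > 0\<close> in auto)
  from filterlim_compose[OF conjunct2[OF H] this]
  have "(\<lambda>n. B (mu + real n + 1) x y) \<longlonglongrightarrow> 0" by simp
  then have "(\<lambda>n. marcumP mu x y + (B (mu + real n + 1) x y - marcumP (mu + real n + 1) x y))
               \<longlonglongrightarrow> marcumP mu x y + (0 - 0)"
    by (intro tendsto_intros marcumP_shift_tendsto_0 assms \<open>mu > 0\<close>)
  moreover have "Bn B n mu x y
      = marcumP mu x y + (B (mu + real n + 1) x y - marcumP (mu + real n + 1) x y)" for n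
    using Bn_minus_marcumP[OF assms \<open>mu > 0\<close>, of B n] by simp
  ultimately show "(\<lambda>n. Bn B n mu x y) \<longlonglongrightarrow> marcumP mu x y" by simp
qed

end
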